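(* Let $d\ge2$, $\varepsilon\ge1$, $s=\lceil d/(1+e^\varepsilon)\rceil$. Let $q^{\mathrm{ss}}$ be the $\varepsilon$-LDP $\texttt{Subset Selection}$ mechanism with estimator $\hat{\mathbf{x}}^{\mathrm{ss}}=(\mathbf{z}-b_{\mathrm{ss}}\mathbf{1})/m_{\mathrm{ss}}$, and let $q^{\mathrm{mrc}}$ be the MRC mechanism simulating it with $N$ candidates and estimator $\hat{\mathbf{x}}^{\mathrm{mrc}}=(\mathbf{z}_K-b_{\mathrm{mrc}}\mathbf{1})/m_{\mathrm{mrc}}$. Let $\lambda>0$. If \[ N\ge\frac{2(e^\varepsilon+3)^2(1+\lambda)^2}{0.24^2\lambda^2}\ln\Big(\frac{8(1+\lambda)}{0.24\lambda}\Big), \] then for every $\mathbf{x}\in\{e_1,\dots,e_d\}$, \[ \mathbb{E}_{q^{\mathrm{mrc}}}\big[\|\hat{\mathbf{x}}^{\mathrm{mrc}}-\mathbf{x}\|_2^2\big]\le(1+4\lambda+5\lambda^2+2\lambda^3)\,\mathbb{E}_{q^{\mathrm{ss}}}\big[\|\hat{\mathbf{x}}^{\mathrm{ss}}-\mathbf{x}\|_2^2\big]. \]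
   Context: $\texttt{Subset Selection}$: inputs $\{e_1,\dots,e_d\}$ (standard basis); outputs $\mathcal{Z}=\{\mathbf{z}\in\{0,1\}^d:\sum_iz_i=s\}$; for $\mathbf{x}=e_j$, $q^{\mathrm{ss}}(\mathbf{z}\mid\mathbf{x})=\frac{e^\varepsilon}{\binom{d-1}{s-1}e^\varepsilon+\binom{d-1}{s}}$ if $z_j=1$ and $\frac{1}{\binom{d-1}{s-1}e^\varepsilon+\binom{d-1}{s}}$ otherwise; $m_{\mathrm{ss}}=\frac{s(d-s)(e^\varepsilon-1)}{(d-1)(s(e^\varepsilon-1)+d)}$, $b_{\mathrm{ss}}=\frac{s((s-1)e^\varepsilon+(d-s))}{(d-1)(s(e^\varepsilon-1)+d)}$; $\mathbf{1}$ is the all-ones vector. MRC: draw $\mathbf{z}_1,\dots,\mathbf{z}_N$ i.i.d. uniform on $\mathcal{Z}$, $\pi^{\mathrm{mrc}}(k)=q^{\mathrm{ss}}(\mathbf{z}_k\mid\mathbf{x})/\sum_{k'}q^{\mathrm{ss}}(\mathbf{z}_{k'}\mid\mathbf{x})$, $K\sim\pi^{\mathrm{mrc}}$. Let $\theta$ be a random variable with $N\theta\sim\mathrm{Binom}(N,s/d)$ and define $m_{\mathrm{mrc}}=\mathbb{E}\big[\frac{\theta e^\varepsilon}{e^\varepsilon\theta+(1-\theta)}\big]-\frac{1}{d-1}\mathbb{E}\big[s-\frac{e^\varepsilon\theta}{e^\varepsilon\theta+(1-\theta)}\big]$ and $b_{\mathrm{mrc}}=\frac{1}{d-1}\mathbb{E}\big[s-\frac{e^\varepsilon\theta}{e^\varepsilon\theta+(1-\theta)}\big]$.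 Expectations under $q^{\mathrm{mrc}}$ are over the candidates and $K$. *)

theory Defs
  imports Complex_Main "HOL-Library.FuncSet"
begin

text \<open>Coordinates are indexed by 0..d-1; the input e_j is represented by j < d.
  An output z in {0,1}^d with s ones is represented by its support S.\<close>

definition ss_size :: "nat \<Rightarrow> real \<Rightarrow> nat" where
  "ss_size d \<epsilon> = nat \<lceil>real d / (1 + exp \<epsilon>)\<rceil>"

definition ss_Z :: "nat \<Rightarrow> nat \<Rightarrow> nat set set" where
  "ss_Z d s = {S. S \<subseteq> {..<d} \<and> card S = s}"

definition q_ss :: "nat \<Rightarrow> nat \<Rightarrow> real \<Rightarrow> nat \<Rightarrow> nat set \<Rightarrow> real" where
  "q_ss d s \<epsilon> j S = (if j \<in> S then exp \<epsilon> else 1) /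
     (real ((d - 1) choose (s - 1)) * exp \<epsilon> + real ((d - 1) choose s))"

definition m_ss :: "nat \<Rightarrow> nat \<Rightarrow> real \<Rightarrow> real" where
  "m_ss d s \<epsilon> = real s * (real d - real s) * (exp \<epsilon> - 1) /
     ((real d - 1) * (real s * (exp \<epsilon> - 1) + real d))"

definition b_ss :: "nat \<Rightarrow> nat \<Rightarrow> real \<Rightarrow> real" where
  "b_ss d s \<epsilon> = real s * ((real s - 1) * exp \<epsilon> + (real d - real s)) /
     ((real d - 1) * (real s * (exp \<epsilon> - 1) + real d))"

definition sq_err :: "nat \<Rightarrow> nat \<Rightarrow> real \<Rightarrow> real \<Rightarrow> nat set \<Rightarrow> real" where
  "sq_err d j m b S = (\<Sum>i<d. ((of_bool (i \<in> S) - b) / m - of_bool (i = j))\<^sup>2)"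

definition E_ss :: "nat \<Rightarrow> nat \<Rightarrow> real \<Rightarrow> nat \<Rightarrow> real" where
  "E_ss d s \<epsilon> j = (\<Sum>S\<in>ss_Z d s. q_ss d s \<epsilon> j S * sq_err d j (m_ss d s \<epsilon>) (b_ss d s \<epsilon>) S)"

definition binom_exp :: "nat \<Rightarrow> real \<Rightarrow> (real \<Rightarrow> real) \<Rightarrow> real" where
  "binom_exp N p f = (\<Sum>k\<le>N. real (N choose k) * p ^ k * (1 - p) ^ (N - k) * f (real k / real N))"

definition m_mrc :: "nat \<Rightarrow> nat \<Rightarrow> real \<Rightarrow> nat \<Rightarrow> real" where
  "m_mrc d s \<epsilon> N =
     binom_exp N (real s / real d) (\<lambda>\<theta>. \<theta> * exp \<epsilon> / (exp \<epsilon> * \<theta> + (1 - \<theta>)))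
     - 1 / (real d - 1) *
       binom_exp N (real s / real d) (\<lambda>\<theta>. real s - exp \<epsilon> * \<theta> / (exp \<epsilon> * \<theta> + (1 - \<theta>)))"

definition b_mrc :: "nat \<Rightarrow> nat \<Rightarrow> real \<Rightarrow> nat \<Rightarrow> real" where
  "b_mrc d s \<epsilon> N =
     1 / (real d - 1) *
       binom_exp N (real s / real d) (\<lambda>\<theta>. real s - exp \<epsilon> * \<theta> / (exp \<epsilon> * \<theta> + (1 - \<theta>)))"

text \<open>MRC: candidates zs k (k < N) i.i.d. uniform on ss_Z d s, index K chosen with
  probability q_ss(zs K)/sum_k q_ss(zs k); expectation over candidates and K.\<close>
definition E_mrc :: "nat \<Rightarrow> nat \<Rightarrow> real \<Rightarrow> nat \<Rightarrow> nat \<Rightarrow> real" where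
  "E_mrc d s \<epsilon> N j =
     (\<Sum>zs\<in>PiE {..<N} (\<lambda>_. ss_Z d s).
        \<Sum>k<N. q_ss d s \<epsilon> j (zs k) / (\<Sum>k'<N. q_ss d s \<epsilon> j (zs k'))
               * sq_err d j (m_mrc d s \<epsilon> N) (b_mrc d s \<epsilon> N) (zs k))
     / real (card (ss_Z d s)) ^ N"

end

theory Submission
  imports Defs
begin

text \<open>Both mechanisms output an \<open>s\<close>-subset, and for such outputs the squared error of a
  debiased estimator only depends on whether the subset contains the true coordinate. Hence each
  mean squared error is the same rational function \<open>risk d s p\<close> of the probability \<open>p\<close> that
  the output contains the true coordinate. With \<open>e = exp \<epsilon>\<close>, Subset Selection has
  \<open>p = tilt e (s/d)\<close>. For MRC, if a fraction \<open>\<theta>\<close> of the candidates contain it, the selected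
  one does with probability \<open>tilt e \<theta>\<close>; as \<open>N\<theta> ~ Binom(N, s/d)\<close>, concavity of \<open>tilt e\<close> puts \<open>P = E[tilt e \<theta>]\<close> between
  \<open>p - tilt_curv e (s/d) Var \<theta>\<close> and \<open>p\<close>. A perturbation bound for \<open>risk\<close> turns this into the factor
  \<open>(1 + \<lambda>)\<^sup>2 (1 + 2\<lambda>)\<close> as soon as \<open>N \<ge> e (1 + \<lambda>) / \<lambda>\<close>, which the hypothesis on \<open>N\<close> implies by a
  wide margin.\<close>

section \<open>Binomial sums\<close>

definition binom_sum :: "nat \<Rightarrow> real \<Rightarrow> real \<Rightarrow> (nat \<Rightarrow> real) \<Rightarrow> real" where
  "binom_sum N a b h = (\<Sum>k\<le>N. real (N choose k) * a ^ k * b ^ (N - k) * h k)"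

lemma binom_sum_Suc:
  "binom_sum (Suc N) a b h = binom_sum N a b (\<lambda>k. a * h (Suc k) + b * h k)"
proof -
  have L: "binom_sum (Suc N) a b h = b ^ Suc N * h 0
      + (\<Sum>i\<le>N. real (N choose i) * a ^ Suc i * b ^ (N - i) * h (Suc i))
      + (\<Sum>i\<le>N. real (N choose Suc i) * a ^ Suc i * b ^ (N - i) * h (Suc i))"
    unfolding binom_sum_def
    by (subst sum.atMost_Suc_shift) (simp add: sum.distrib distrib_right del: sum.atMost_Suc)
  have "b ^ Suc N * h 0 + (\<Sum>i\<le>N. real (N choose Suc i) * a ^ Suc i * b ^ (N - i) * h (Suc i))
      = (\<Sum>k\<le>Suc N. real (N choose k) * a ^ k * b ^ (Suc N - k) * h k)"
    by (rule sym, subst sum.atMost_Suc_shift) (simp del: sum.atMost_Suc)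
  also have "\<dots> = (\<Sum>k\<le>N. real (N choose k) * a ^ k * b ^ (Suc N - k) * h k)"
    by simp
  also have "\<dots> + (\<Sum>i\<le>N. real (N choose i) * a ^ Suc i * b ^ (N - i) * h (Suc i))
      = binom_sum N a b (\<lambda>k. a * h (Suc k) + b * h k)"
    unfolding binom_sum_def
    by (auto simp: sum.distrib algebra_simps Suc_diff_le intro!: sum.cong)
  finally show ?thesis
    using L by linarith
qed

lemma binom_sum_add: "binom_sum N a b (\<lambda>k. f k + g k) = binom_sum N a b f + binom_sum N a b g"
  unfolding binom_sum_def by (simp add: sum.distrib algebra_simps)

lemma binom_sum_cmult: "binom_sum N a b (\<lambda>k. c * f k) = c * binom_sum N a b f"
  unfolding binom_sum_def by (simp add: sum_distrib_left algebra_simps)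

lemma binom_sum_const:
  assumes "a + b = 1"
  shows "binom_sum N a b (\<lambda>_. c) = c"
proof -
  have "binom_sum N a b (\<lambda>_. c) = c * (a + b) ^ N"
    unfolding binom_sum_def binomial_ring by (simp add: sum_distrib_left algebra_simps)
  then show ?thesis
    using assms by simp
qed

lemma binom_sum_mono:
  "a \<ge> 0 \<Longrightarrow> b \<ge> 0 \<Longrightarrow> (\<And>k. k \<le> N \<Longrightarrow> f k \<le> g k) \<Longrightarrow> binom_sum N a b f \<le> binom_sum N a b g"
  unfolding binom_sum_def by (intro sum_mono mult_left_mono) auto

lemma binom_sum_scale:
  assumes "M \<noteq> 0"
  shows "binom_sum N a b h / M ^ N = binom_sum N (a / M) (b / M) h"
  unfolding binom_sum_def sum_divide_distrib
proof (intro sum.cong refl)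
  fix k assume "k \<in> {..N}"
  then have "M ^ N = M ^ k * M ^ (N - k)"
    by (simp flip: power_add)
  then show "real (N choose k) * a ^ k * b ^ (N - k) * h k / M ^ N =
      real (N choose k) * (a / M) ^ k * (b / M) ^ (N - k) * h k"
    using assms by (simp add: power_divide)
qed

lemma binom_sum_id: "a + b = 1 \<Longrightarrow> binom_sum N a b real = real N * a"
proof (induction N)
  case 0
  then show ?case by (simp add: binom_sum_def)
next
  case (Suc N)
  from Suc.prems have b: "b = 1 - a" by simp
  have "(\<lambda>k. a * real (Suc k) + b * real k) = (\<lambda>k. real k + a)"
    by (simp add: b algebra_simps)
  then have "binom_sum (Suc N) a b real = binom_sum N a b (\<lambda>k. real k + a)"
    by (simp add: binom_sum_Suc)
  then show ?case
    using Suc by (simp add: binom_sum_add binom_sum_const algebra_simps)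
qed

lemma binom_sum_square:
  "a + b = 1 \<Longrightarrow> binom_sum N a b (\<lambda>k. (real k)\<^sup>2) = real N * a * b + (real N)\<^sup>2 * a\<^sup>2"
proof (induction N)
  case 0
  then show ?case by (simp add: binom_sum_def)
next
  case (Suc N)
  from Suc.prems have b: "b = 1 - a" by simp
  have "(\<lambda>k. a * (real (Suc k))\<^sup>2 + b * (real k)\<^sup>2) = (\<lambda>k. (real k)\<^sup>2 + (2 * a) * real k + a)"
    by (simp add: b algebra_simps power2_eq_square)
  then have "binom_sum (Suc N) a b (\<lambda>k. (real k)\<^sup>2)
      = binom_sum N a b (\<lambda>k. (real k)\<^sup>2 + (2 * a) * real k + a)"
    by (simp add: binom_sum_Suc)
  also have "\<dots> = real N * a * b + (real N)\<^sup>2 * a\<^sup>2 + 2 * a * (real N * a) + a"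
    using Suc by (simp only: binom_sum_add binom_sum_cmult binom_sum_const binom_sum_id)
  finally show ?case
    by (simp add: b algebra_simps power2_eq_square)
qed

lemma sum_if_card:
  assumes "finite A"
  shows "(\<Sum>x\<in>A. if P x then u else v) = real (card {x\<in>A. P x}) * u + real (card {x\<in>A. \<not> P x}) * v"
  using assms by (simp add: sum.If_cases Int_def)

lemma card_filter_add_filter_not:
  "finite A \<Longrightarrow> card {x \<in> A. P x} + card {x \<in> A. \<not> P x} = card A"
  by (subst card_Un_disjoint[symmetric]) (auto intro: arg_cong[where f = card])

lemma card_fun_upd_filter:
  "card {k. k < Suc N \<and> P ((g(N := y)) k)} = card {k. k < N \<and> P (g k)} + (if P y then 1 else 0)"
proof -
  have "{k. k < Suc N \<and> P ((g(N := y)) k)} = {k. k < N \<and> P (g k)} \<union> (if P y then {N} else {})"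
    by (auto simp: less_Suc_eq)
  then show ?thesis
    by (simp add: card_Un_disjoint)
qed

lemma sum_PiE_count_eq_binom_sum:
  assumes "finite Z"
  shows "(\<Sum>zs\<in>PiE {..<N} (\<lambda>_. Z). h (card {k. k < N \<and> P (zs k)}))
    = binom_sum N (real (card {z\<in>Z. P z})) (real (card {z\<in>Z. \<not> P z})) h"
proof (induction N arbitrary: h)
  case 0
  then show ?case by (simp add: binom_sum_def)
next
  case (Suc N)
  let ?a = "real (card {z\<in>Z. P z})" and ?b = "real (card {z\<in>Z. \<not> P z})"
  let ?Pi = "PiE {..<N} (\<lambda>_. Z)" and ?c = "\<lambda>g. card {k. k < N \<and> P (g k)}"
  have Pi_Suc: "PiE {..<Suc N} (\<lambda>_. Z) = (\<lambda>(y, g). g(N := y)) ` (Z \<times> ?Pi)"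
    by (simp add: lessThan_Suc PiE_insert_eq)
  have inj: "inj_on (\<lambda>(y, g). g(N := y)) (Z \<times> ?Pi)"
    using inj_combinator[of N "{..<N}" "\<lambda>_. Z"] by simp
  have "(\<Sum>zs\<in>PiE {..<Suc N} (\<lambda>_. Z). h (card {k. k < Suc N \<and> P (zs k)}))
      = (\<Sum>(y, g)\<in>Z \<times> ?Pi. h (card {k. k < Suc N \<and> P ((g(N := y)) k)}))"
    unfolding Pi_Suc by (subst sum.reindex[OF inj]) (simp add: case_prod_beta)
  also have "\<dots> = (\<Sum>y\<in>Z. \<Sum>g\<in>?Pi. h (?c g + (if P y then 1 else 0)))"
    unfolding sum.cartesian_product by (simp only: card_fun_upd_filter)
  also have "\<dots> = (\<Sum>g\<in>?Pi. \<Sum>y\<in>Z. h (?c g + (if P y then 1 else 0)))"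
    by (rule sum.swap)
  also have "\<dots> = (\<Sum>g\<in>?Pi. ?a * h (Suc (?c g)) + ?b * h (?c g))"
  proof (intro sum.cong refl)
    fix g
    have "(\<Sum>y\<in>Z. h (?c g + (if P y then 1 else 0))) = (\<Sum>y\<in>Z. if P y then h (Suc (?c g)) else h (?c g))"
      by (intro sum.cong) auto
    then show "(\<Sum>y\<in>Z. h (?c g + (if P y then 1 else 0))) = ?a * h (Suc (?c g)) + ?b * h (?c g)"
      using assms by (simp add: sum_if_card)
  qed
  also have "\<dots> = binom_sum (Suc N) ?a ?b h"
    unfolding binom_sum_Suc by (rule Suc.IH)
  finally show ?case .
qed

lemma binom_exp_eq_binom_sum: "binom_exp N p f = binom_sum N p (1 - p) (\<lambda>k. f (real k / real N))"
  unfolding binom_exp_def binom_sum_def ..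

lemma binom_exp_affine: "binom_exp N p (\<lambda>\<theta>. \<alpha> + \<beta> * f \<theta>) = \<alpha> + \<beta> * binom_exp N p f"
  unfolding binom_exp_eq_binom_sum by (simp add: binom_sum_add binom_sum_cmult binom_sum_const)

lemma binom_exp_mono:
  assumes "0 \<le> p" "p \<le> 1" "\<And>\<theta>. 0 \<le> \<theta> \<Longrightarrow> \<theta> \<le> 1 \<Longrightarrow> f \<theta> \<le> g \<theta>"
  shows "binom_exp N p f \<le> binom_exp N p g"
  unfolding binom_exp_eq_binom_sum
  using assms by (intro binom_sum_mono assms(3)) (auto simp: divide_le_eq)

lemma binom_exp_quadratic:
  assumes "N > 0"
  shows "binom_exp N p (\<lambda>\<theta>. \<alpha> + \<beta> * (\<theta> - p) + \<gamma> * (\<theta> - p)\<^sup>2) = \<alpha> + \<gamma> * (p * (1 - p) / real N)"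
proof -
  have ab: "p + (1 - p) = 1" by simp
  have "binom_exp N p (\<lambda>\<theta>. \<alpha> + \<beta> * (\<theta> - p) + \<gamma> * (\<theta> - p)\<^sup>2)
      = binom_sum N p (1 - p) (\<lambda>k. (\<alpha> - \<beta> * p + \<gamma> * p\<^sup>2)
          + ((\<beta> - 2 * \<gamma> * p) / real N) * real k + (\<gamma> / (real N)\<^sup>2) * (real k)\<^sup>2)"
    unfolding binom_exp_eq_binom_sum using assms
    by (intro arg_cong[where f = "binom_sum N p (1 - p)"] ext) (simp add: field_simps power2_eq_square)
  also have "\<dots> = (\<alpha> - \<beta> * p + \<gamma> * p\<^sup>2) + ((\<beta> - 2 * \<gamma> * p) / real N) * (real N * p)
      + (\<gamma> / (real N)\<^sup>2) * (real N * p * (1 - p) + (real N)\<^sup>2 * p\<^sup>2)"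
    by (simp only: binom_sum_add binom_sum_cmult binom_sum_const[OF ab] binom_sum_id[OF ab]
        binom_sum_square[OF ab])
  also have "\<dots> = \<alpha> + \<gamma> * (p * (1 - p) / real N)"
    using assms by (simp add: field_simps power2_eq_square)
  finally show ?thesis .
qed

section \<open>The tilted inclusion probability\<close>

text \<open>If a fraction \<open>\<theta>\<close> of the candidates contain the true coordinate and these carry weight
  \<open>e\<close> against \<open>1\<close> for the others, \<open>tilt e \<theta>\<close> is the probability that the selected candidate
  contains it.\<close>

definition tilt :: "real \<Rightarrow> real \<Rightarrow> real" where
  "tilt e \<theta> = \<theta> * e / (e * \<theta> + (1 - \<theta>))"

definition tilt_curv :: "real \<Rightarrow> real \<Rightarrow> real" where
  "tilt_curv e \<mu> = (e - 1) * e / (1 + (e - 1) * \<mu>)\<^sup>2"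

lemma tilt_frac:
  assumes "n > 0"
  shows "tilt e (c / n) = c * e / (c * e + (n - c))"
proof -
  have den: "e * (c / n) + (1 - c / n) = (c * e + (n - c)) / n"
    using assms by (simp add: field_simps)
  have num: "c / n * e = (c * e) / n"
    by simp
  show ?thesis
    unfolding tilt_def den num using assms by (cases "c * e + (n - c) = 0") (simp_all add: field_simps)
qed

lemma tilt_bounds:
  assumes "e > 0" "0 \<le> \<theta>" "\<theta> \<le> 1"
  shows "0 \<le> tilt e \<theta>" "tilt e \<theta> \<le> 1"
proof -
  have "0 < e * \<theta> + (1 - \<theta>)"
    using assms by (cases "\<theta> = 1") (simp_all add: add_nonneg_pos)
  then show "0 \<le> tilt e \<theta>" "tilt e \<theta> \<le> 1"
    unfolding tilt_def using assms by (simp_all add: divide_le_eq)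
qed

lemma tilt_tangent_gap:
  assumes "e \<ge> 1" "0 \<le> \<theta>" "0 \<le> \<mu>"
  shows "tilt e \<mu> + e / (1 + (e - 1) * \<mu>)\<^sup>2 * (\<theta> - \<mu>) - tilt e \<theta>
      = tilt_curv e \<mu> * (\<theta> - \<mu>)\<^sup>2 / (1 + (e - 1) * \<theta>)"
proof -
  define u v where "u = 1 + (e - 1) * \<theta>" and "v = 1 + (e - 1) * \<mu>"
  have pos: "u > 0" "v > 0"
    unfolding u_def v_def using assms by (simp_all add: add_pos_nonneg)
  have "tilt e \<theta> = \<theta> * e / u" "tilt e \<mu> = \<mu> * e / v"
    unfolding tilt_def u_def v_def by (simp_all add: algebra_simps)
  then have "tilt e \<mu> + e / v\<^sup>2 * (\<theta> - \<mu>) - tilt e \<theta>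
      = (\<mu> * e * u * v + e * u * (\<theta> - \<mu>) - \<theta> * e * v\<^sup>2) / (u * v\<^sup>2)"
    using pos by (simp add: field_simps power2_eq_square)
  also have "\<mu> * e * u * v + e * u * (\<theta> - \<mu>) - \<theta> * e * v\<^sup>2 = (e - 1) * e * (\<theta> - \<mu>)\<^sup>2"
    unfolding u_def v_def by (simp add: algebra_simps power2_eq_square)
  finally show ?thesis
    unfolding tilt_curv_def u_def[symmetric] v_def[symmetric] by simp
qed

lemma tilt_le_tangent:
  assumes "e \<ge> 1" "0 \<le> \<theta>" "0 \<le> \<mu>"
  shows "tilt e \<theta> \<le> tilt e \<mu> + e / (1 + (e - 1) * \<mu>)\<^sup>2 * (\<theta> - \<mu>)"
proof -
  have "tilt_curv e \<mu> \<ge> 0" "1 + (e - 1) * \<theta> > 0"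
    using assms by (simp_all add: tilt_curv_def add_pos_nonneg)
  then have "tilt_curv e \<mu> * (\<theta> - \<mu>)\<^sup>2 / (1 + (e - 1) * \<theta>) \<ge> 0"
    by simp
  then show ?thesis
    using tilt_tangent_gap[OF assms] by linarith
qed

lemma tilt_ge_tangent:
  assumes "e \<ge> 1" "0 \<le> \<theta>" "0 \<le> \<mu>"
  shows "tilt e \<mu> + e / (1 + (e - 1) * \<mu>)\<^sup>2 * (\<theta> - \<mu>) - tilt_curv e \<mu> * (\<theta> - \<mu>)\<^sup>2 \<le> tilt e \<theta>"
proof -
  have "tilt_curv e \<mu> * (\<theta> - \<mu>)\<^sup>2 \<ge> 0" "1 + (e - 1) * \<theta> \<ge> 1"
    using assms by (simp_all add: tilt_curv_def)
  then have "tilt_curv e \<mu> * (\<theta> - \<mu>)\<^sup>2 / (1 + (e - 1) * \<theta>) \<le> tilt_curv e \<mu> * (\<theta> - \<mu>)\<^sup>2"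
    by (simp add: divide_le_eq mult_le_cancel_left1)
  then show ?thesis
    using tilt_tangent_gap[OF assms] by linarith
qed

lemma binom_exp_tilt_le:
  assumes "e \<ge> 1" "0 \<le> \<mu>" "\<mu> \<le> 1" "N > 0"
  shows "binom_exp N \<mu> (tilt e) \<le> tilt e \<mu>"
proof -
  let ?c = "e / (1 + (e - 1) * \<mu>)\<^sup>2"
  have "binom_exp N \<mu> (tilt e) \<le> binom_exp N \<mu> (\<lambda>\<theta>. tilt e \<mu> + ?c * (\<theta> - \<mu>) + 0 * (\<theta> - \<mu>)\<^sup>2)"
    using assms tilt_le_tangent by (intro binom_exp_mono) auto
  also have "\<dots> = tilt e \<mu>"
    using \<open>N > 0\<close> by (subst binom_exp_quadratic) simp_all
  finally show ?thesis .
qed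

lemma binom_exp_tilt_ge:
  assumes "e \<ge> 1" "0 \<le> \<mu>" "\<mu> \<le> 1" "N > 0"
  shows "tilt e \<mu> - tilt_curv e \<mu> * (\<mu> * (1 - \<mu>) / real N) \<le> binom_exp N \<mu> (tilt e)"
proof -
  let ?c = "e / (1 + (e - 1) * \<mu>)\<^sup>2"
  have "tilt e \<mu> - tilt_curv e \<mu> * (\<mu> * (1 - \<mu>) / real N)
      = binom_exp N \<mu> (\<lambda>\<theta>. tilt e \<mu> + ?c * (\<theta> - \<mu>) + (- tilt_curv e \<mu>) * (\<theta> - \<mu>)\<^sup>2)"
    using \<open>N > 0\<close> by (subst binom_exp_quadratic) simp_all
  also have "\<dots> \<le> binom_exp N \<mu> (tilt e)"
    using assms tilt_ge_tangent by (intro binom_exp_mono) auto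
  finally show ?thesis .
qed

section \<open>Mean squared error as a function of the inclusion probability\<close>

text \<open>The mean squared error of the debiased estimator when the output subset contains the true
  coordinate with probability \<open>p\<close>; see \<open>sq_err_base_debiased\<close>.\<close>

definition risk :: "real \<Rightarrow> real \<Rightarrow> real \<Rightarrow> real" where
  "risk d s p = (d - 1) * (s * (d - 1) - s\<^sup>2 + 2 * s * p - d * p\<^sup>2) / (d * p - s)\<^sup>2"

lemma risk_perturb_le:
  fixes d s p P lam :: real
  defines "g \<equiv> \<lambda>x. s * (d - 1) - s\<^sup>2 + 2 * s * x - d * x\<^sup>2"
  assumes "d > 1" "lam > 0" "d * p - s > 0" "P \<le> p"
    and gap: "d * (p - P) \<le> lam / (1 + lam) * (d * p - s)"
    and gap_mult: "(p - P) * (d * p - s) \<le> lam * g p"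
  shows "d * P - s > 0" "risk d s P \<le> (1 + 4 * lam + 5 * lam\<^sup>2 + 2 * lam ^ 3) * risk d s p"
proof -
  define A A' where "A = d * p - s" and "A' = d * P - s"
  have "A / (1 + lam) = A - lam / (1 + lam) * A"
    using \<open>lam > 0\<close> by (simp add: field_simps)
  moreover have "A' = A - d * (p - P)"
    unfolding A_def A'_def by (simp add: algebra_simps)
  ultimately have A'_ge: "A / (1 + lam) \<le> A'"
    using gap unfolding A_def by linarith
  moreover have A_div_pos: "A / (1 + lam) > 0"
    using assms unfolding A_def by simp
  ultimately have A'_pos: "A' > 0"
    by linarith
  then show "d * P - s > 0"
    unfolding A'_def .
  have "0 \<le> (p - P) * (d * p - s)"
    using assms by simp
  then have "0 \<le> lam * g p"
    using gap_mult by linarith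
  then have gp_nonneg: "g p \<ge> 0"
    using \<open>lam > 0\<close> by (simp add: zero_le_mult_iff)
  have "g P - g p = (p - P) * (d * (p + P) - 2 * s)"
    unfolding g_def by (simp add: algebra_simps power2_eq_square)
  also have "\<dots> \<le> (p - P) * (2 * A)"
    unfolding A_def using assms by (intro mult_left_mono) auto
  finally have gP: "g P \<le> (1 + 2 * lam) * g p"
    using gap_mult unfolding A_def by (simp add: algebra_simps)
  have "(A / (1 + lam))\<^sup>2 \<le> A'\<^sup>2"
    using A'_ge A_div_pos by (intro power_mono) auto
  then have "1 / A'\<^sup>2 \<le> 1 / (A / (1 + lam))\<^sup>2"
    using A_div_pos A'_pos by (intro divide_left_mono mult_pos_pos) auto
  then have inv_sq: "1 / A'\<^sup>2 \<le> (1 + lam)\<^sup>2 / A\<^sup>2"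
    by (simp add: power_divide)
  have "risk d s P = (d - 1) * g P * (1 / A'\<^sup>2)"
    unfolding risk_def g_def A'_def by simp
  also have "\<dots> \<le> (d - 1) * ((1 + 2 * lam) * g p) * ((1 + lam)\<^sup>2 / A\<^sup>2)"
    using assms gP gp_nonneg inv_sq
    by (intro mult_mono mult_left_mono) (auto intro!: mult_nonneg_nonneg)
  also have "\<dots> = (1 + 4 * lam + 5 * lam\<^sup>2 + 2 * lam ^ 3) * risk d s p"
    unfolding risk_def g_def A_def by (simp add: field_simps power2_eq_square power3_eq_cube)
  finally show "risk d s P \<le> (1 + 4 * lam + 5 * lam\<^sup>2 + 2 * lam ^ 3) * risk d s p" .
qed

lemma risk_numerator_ge:
  fixes d s p :: real
  assumes "0 \<le> p" "p \<le> 1" "1 \<le> s" "s \<le> d - 1"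
  shows "(d - 1) * (p * (1 - p)) \<le> s * (d - 1) - s\<^sup>2 + 2 * s * p - d * p\<^sup>2"
proof -
  have "s * (d - 1) - s\<^sup>2 + 2 * s * p - d * p\<^sup>2 - (d - 1) * (p * (1 - p)) = (s - p) * (d - 1 - (s - p))"
    by (simp add: algebra_simps power2_eq_square)
  moreover have "(s - p) * (d - 1 - (s - p)) \<ge> 0"
    using assms by (intro mult_nonneg_nonneg) auto
  ultimately show ?thesis by linarith
qed

lemma tilt_inclusion_bounds:
  fixes d s e :: real
  assumes "e > 1" "1 \<le> s" "s \<le> d - 1"
  defines "\<mu> \<equiv> s / d"
  defines "p \<equiv> tilt e \<mu>" and "V \<equiv> tilt_curv e \<mu> * (\<mu> * (1 - \<mu>))"
  shows "d * p - s > 0" "d * V \<le> e * (d * p - s)" "V * (d * p - s) \<le> (e - 1) * ((d - 1) * (p * (1 - p)))"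
proof -
  define a v where "a = e - 1" and "v = 1 + a * \<mu>"
  have d: "d > 0" and \<mu>: "0 < \<mu>" "\<mu> < 1" and a: "a > 0"
    using assms unfolding \<mu>_def a_def by simp_all
  have v: "v \<ge> 1"
    unfolding v_def using a \<mu> by simp
  have s: "s = d * \<mu>"
    unfolding \<mu>_def using d by simp
  have p: "p = e * \<mu> / v"
    unfolding p_def tilt_def v_def a_def by (simp add: algebra_simps)
  have A: "d * p - s = d * \<mu> * a * (1 - \<mu>) / v"
    unfolding p s using v unfolding v_def a_def by (simp add: field_simps)
  have V: "V = a * e * (\<mu> * (1 - \<mu>)) / v\<^sup>2"
    unfolding V_def tilt_curv_def v_def a_def by simp
  have pq: "p * (1 - p) = e * \<mu> * (1 - \<mu>) / v\<^sup>2"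
    unfolding p using v unfolding v_def a_def by (simp add: field_simps power2_eq_square)
  show A_pos: "d * p - s > 0"
    unfolding A using d \<mu> a v by simp
  have "d * V = e * (d * p - s) / v"
    unfolding V A using v by (simp add: field_simps power2_eq_square)
  also have "\<dots> \<le> e * (d * p - s)"
  proof -
    have "e * (d * p - s) \<ge> 0"
      using A_pos assms(1) by simp
    then show ?thesis
      using v by (simp add: divide_le_eq mult_le_cancel_left1)
  qed
  finally show "d * V \<le> e * (d * p - s)" .
  have "V * (d * p - s) = a * (p * (1 - p)) * ((d - s) * (a * \<mu> / v))"
  proof -
    have ds: "d - s = d * (1 - \<mu>)"
      unfolding s by (simp add: algebra_simps)
    show ?thesis
      unfolding V A pq ds using v by (simp add: field_simps power2_eq_square)
  qed
  also have "\<dots> \<le> a * (p * (1 - p)) * ((d - 1) * 1)"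
  proof -
    have "a * \<mu> / v \<le> 1" "0 \<le> a * \<mu> / v"
      using a \<mu> v unfolding v_def by (simp_all add: divide_le_eq add_pos_nonneg)
    moreover have "0 \<le> a * (p * (1 - p))"
      unfolding pq using a \<mu> assms(1) by simp
    ultimately show ?thesis
      using assms(2,3) by (intro mult_left_mono mult_mono) auto
  qed
  finally show "V * (d * p - s) \<le> (e - 1) * ((d - 1) * (p * (1 - p)))"
    unfolding a_def by (simp add: ac_simps)
qed

lemma tilt_gap_small:
  fixes d s e lam N \<delta> :: real
  assumes "e > 1" "1 \<le> s" "s \<le> d - 1" "lam > 0" "N \<ge> e * (1 + lam) / lam"
    and "\<delta> \<le> tilt_curv e (s / d) * (s / d * (1 - s / d)) / N"
  defines "p \<equiv> tilt e (s / d)"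
  shows "d * \<delta> \<le> lam / (1 + lam) * (d * p - s)"
    "\<delta> * (d * p - s) \<le> lam * (s * (d - 1) - s\<^sup>2 + 2 * s * p - d * p\<^sup>2)"
proof -
  define V where "V = tilt_curv e (s / d) * (s / d * (1 - s / d))"
  have "e * (1 + lam) / lam > 0"
    using assms(1,4) by simp
  then have N: "N > 0"
    using assms(5) by linarith
  have A_pos: "d * p - s > 0" and dV: "d * V \<le> e * (d * p - s)"
    and VA: "V * (d * p - s) \<le> (e - 1) * ((d - 1) * (p * (1 - p)))"
    using tilt_inclusion_bounds[OF assms(1-3)] unfolding p_def V_def by simp_all
  have p: "0 \<le> p" "p \<le> 1"
    unfolding p_def using tilt_bounds[of e "s / d"] assms(1-3) by simp_all
  have e_N: "e / N \<le> lam / (1 + lam)"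
    using assms(4,5) N by (simp add: field_simps)
  have "d * \<delta> \<le> d * V / N"
    using mult_left_mono[OF assms(6), of d] assms(2,3) unfolding V_def by simp
  also have "\<dots> \<le> e / N * (d * p - s)"
    using dV N by (simp add: divide_right_mono)
  also have "\<dots> \<le> lam / (1 + lam) * (d * p - s)"
    using mult_right_mono[OF e_N] A_pos by simp
  finally show "d * \<delta> \<le> lam / (1 + lam) * (d * p - s)" .
  have "\<delta> * (d * p - s) \<le> V * (d * p - s) / N"
    using mult_right_mono[OF assms(6), of "d * p - s"] A_pos unfolding V_def by simp
  also have "\<dots> \<le> (e - 1) / N * ((d - 1) * (p * (1 - p)))"
    using VA N by (simp add: divide_right_mono)
  also have "\<dots> \<le> lam * ((d - 1) * (p * (1 - p)))"
  proof (rule mult_right_mono)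
    have "lam / (1 + lam) \<le> lam"
      using assms(4) by (simp add: divide_le_eq mult_le_cancel_left1)
    moreover have "(e - 1) / N \<le> e / N"
      using N by (simp add: divide_right_mono)
    ultimately show "(e - 1) / N \<le> lam"
      using e_N by linarith
    show "0 \<le> (d - 1) * (p * (1 - p))"
      using p assms(2,3) by simp
  qed
  also have "\<dots> \<le> lam * (s * (d - 1) - s\<^sup>2 + 2 * s * p - d * p\<^sup>2)"
    using risk_numerator_ge[OF p assms(2,3)] assms(4) by simp
  finally show "\<delta> * (d * p - s) \<le> lam * (s * (d - 1) - s\<^sup>2 + 2 * s * p - d * p\<^sup>2)" .
qed

lemma risk_binom_exp_tilt_le:
  fixes d s e lam :: real
  assumes "e > 1" "1 \<le> s" "s \<le> d - 1" "lam > 0" "real N \<ge> e * (1 + lam) / lam"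
  defines "p \<equiv> tilt e (s / d)" and "P \<equiv> binom_exp N (s / d) (tilt e)"
  shows "d * P - s > 0" "risk d s P \<le> (1 + 4 * lam + 5 * lam\<^sup>2 + 2 * lam ^ 3) * risk d s p"
proof -
  have "e * (1 + lam) / lam > 0"
    using assms by simp
  then have "N > 0"
    using assms(5) by simp
  have \<mu>: "0 \<le> s / d" "s / d \<le> 1"
    using assms(2,3) by simp_all
  have "P \<le> p"
    unfolding P_def p_def using binom_exp_tilt_le assms(1) \<mu> \<open>N > 0\<close> by simp
  moreover have "p - P \<le> tilt_curv e (s / d) * (s / d * (1 - s / d)) / real N"
    unfolding P_def p_def using binom_exp_tilt_ge[of e "s / d" N] assms(1) \<mu> \<open>N > 0\<close> by simp
  note small = tilt_gap_small[OF assms(1-5) this, folded p_def]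
  ultimately show "d * P - s > 0" "risk d s P \<le> (1 + 4 * lam + 5 * lam\<^sup>2 + 2 * lam ^ 3) * risk d s p"
    using risk_perturb_le[OF _ assms(4) _ _ small] tilt_inclusion_bounds(1)[OF assms(1-3), folded p_def]
      assms(2,3) by simp_all
qed

section \<open>Subset Selection and its MRC simulation\<close>

definition sq_err_base :: "nat \<Rightarrow> nat \<Rightarrow> real \<Rightarrow> real \<Rightarrow> real" where
  "sq_err_base d s m b = (real s * (1 - 2 * b) + real d * b\<^sup>2) / m\<^sup>2 + 2 * b / m + 1"

lemma sq_err_subset:
  assumes "S \<in> ss_Z d s" "j < d"
  shows "sq_err d j m b S = sq_err_base d s m b - 2 * of_bool (j \<in> S) / m"
proof -
  have S: "S \<subseteq> {..<d}" "card S = s"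
    using assms(1) by (auto simp: ss_Z_def)
  have summand: "((of_bool (i \<in> S) - b) / m - of_bool (i = j))\<^sup>2 =
      (of_bool (i \<in> S) * (1 - 2 * b) + b\<^sup>2) / m\<^sup>2 - (if i = j then 2 * (of_bool (j \<in> S) - b) / m - 1 else 0)"
    for i
    by (cases "m = 0"; cases "i \<in> S"; cases "i = j") (simp_all add: field_simps power2_eq_square)
  have "(\<Sum>i<d. (of_bool (i \<in> S) * (1 - 2 * b) + b\<^sup>2) / m\<^sup>2) = (real s * (1 - 2 * b) + real d * b\<^sup>2) / m\<^sup>2"
    using S by (simp add: sum_divide_distrib[symmetric] sum.distrib sum_distrib_right[symmetric]
        Int_absorb1 flip: Collect_mem_eq)
  then show ?thesis
    unfolding sq_err_def summand sum_subtractf sq_err_base_def using assms(2)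
    by (simp add: diff_divide_distrib)
qed

lemma sq_err_base_debiased:
  assumes "d \<ge> 2" "real d * p \<noteq> real s" "b = (real s - p) / (real d - 1)" "m = p - b"
  shows "sq_err_base d s m b - 2 / m * p = risk (real d) (real s) p"
proof -
  define D A where "D = real d - 1" and "A = real d * p - real s"
  have D: "D \<noteq> 0" and A: "A \<noteq> 0"
    unfolding D_def A_def using assms(1,2) by simp_all
  have b: "b = (real s - p) / D" and m: "m = A / D"
    unfolding assms(4) assms(3) D_def[symmetric] using D unfolding D_def A_def by (simp_all add: field_simps)
  have "sq_err_base d s m b - 2 / m * p = (real s * D\<^sup>2 - 2 * real s * D * (real s - p)
      + real d * (real s - p)\<^sup>2 + 2 * (real s - p) * A + A\<^sup>2 - 2 * p * D * A) / A\<^sup>2"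
    unfolding sq_err_base_def b m using D A by (simp add: field_simps power2_eq_square)
  also have "real s * D\<^sup>2 - 2 * real s * D * (real s - p) + real d * (real s - p)\<^sup>2
      + 2 * (real s - p) * A + A\<^sup>2 - 2 * p * D * A
      = (real d - 1) * (real s * (real d - 1) - (real s)\<^sup>2 + 2 * real s * p - real d * p\<^sup>2)"
    unfolding D_def A_def by (simp add: algebra_simps power2_eq_square)
  finally show ?thesis
    unfolding risk_def A_def .
qed

lemma finite_ss_Z: "finite (ss_Z d s)"
  unfolding ss_Z_def by (rule finite_subset[of _ "Pow {..<d}"]) auto

lemma card_ss_Z: "card (ss_Z d s) = d choose s"
  unfolding ss_Z_def using n_subsets[of "{..<d}" s] by simp

lemma card_ss_Z_not_mem:
  assumes "j < d"
  shows "card {S \<in> ss_Z d s. j \<notin> S} = (d - 1) choose s"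
proof -
  have "{S \<in> ss_Z d s. j \<notin> S} = {S. S \<subseteq> {..<d} - {j} \<and> card S = s}"
    unfolding ss_Z_def by auto
  then show ?thesis
    using n_subsets[of "{..<d} - {j}" s] assms by simp
qed

lemma card_ss_Z_mem:
  assumes "j < d" "1 \<le> s"
  shows "card {S \<in> ss_Z d s. j \<in> S} = (d - 1) choose (s - 1)"
proof -
  have "card {S \<in> ss_Z d s. j \<in> S} + card {S \<in> ss_Z d s. j \<notin> S} = card (ss_Z d s)"
    using finite_ss_Z by (rule card_filter_add_filter_not)
  moreover obtain n t where "d = Suc n" "s = Suc t"
    using assms by (metis Suc_le_D less_imp_Suc_add One_nat_def)
  ultimately show ?thesis
    using card_ss_Z card_ss_Z_not_mem[OF assms(1)] by simp
qed

lemma card_ss_Z_mem_fraction: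
  assumes "j < d" "1 \<le> s" "s \<le> d"
  shows "real (card {S \<in> ss_Z d s. j \<in> S}) / real (card (ss_Z d s)) = real s / real d"
proof -
  have "real s * real (d choose s) = real d * real ((d - 1) choose (s - 1))"
    using times_binomial_minus1_eq[of s d] assms(2) by (metis of_nat_mult less_le_trans zero_less_one)
  moreover have "real (d choose s) \<noteq> 0" "real d \<noteq> 0"
    using assms by simp_all
  ultimately show ?thesis
    unfolding card_ss_Z_mem[OF assms(1,2)] card_ss_Z by (simp add: field_simps)
qed

lemma sum_tilted_weights:
  fixes P :: "'a \<Rightarrow> bool"
  assumes "finite I" "I \<noteq> {}" "e > 0"
  defines "c \<equiv> real (card {i \<in> I. P i})" and "n \<equiv> real (card I)"
  shows "(\<Sum>i\<in>I. (if P i then e else 1) / (c * e + (n - c)) * (\<alpha> - \<beta> * of_bool (P i)))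
       = \<alpha> - \<beta> * tilt e (c / n)"
proof -
  have not_P: "real (card {i \<in> I. \<not> P i}) = n - c"
    unfolding c_def n_def using card_filter_add_filter_not[OF assms(1), of P] by (simp flip: of_nat_add)
  have c: "0 \<le> c" "c \<le> n" and "n > 0"
    unfolding c_def n_def using assms(1,2) by (simp_all add: card_mono card_gt_0_iff)
  define D where "D = c * e + (n - c)"
  have "D > 0"
  proof (cases "c = 0")
    case False
    then have "c * e > 0"
      using c assms(3) by simp
    then show ?thesis
      unfolding D_def using c by linarith
  qed (use \<open>n > 0\<close> in \<open>simp add: D_def\<close>)
  have "(\<Sum>i\<in>I. (if P i then e else 1) / D * (\<alpha> - \<beta> * of_bool (P i)))
      = (\<Sum>i\<in>I. if P i then e / D * (\<alpha> - \<beta>) else \<alpha> / D)"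
    by (intro sum.cong) auto
  also have "\<dots> = c * (e / D * (\<alpha> - \<beta>)) + (n - c) * (\<alpha> / D)"
    unfolding sum_if_card[OF assms(1)] not_P c_def ..
  also have "\<dots> = (\<alpha> * D - \<beta> * (c * e)) / D"
    using \<open>D > 0\<close> by (simp add: field_simps) (simp add: D_def algebra_simps)
  also have "\<dots> = \<alpha> - \<beta> * (c * e / (c * e + (n - c)))"
    unfolding D_def[symmetric] using \<open>D > 0\<close> by (simp add: field_simps)
  also have "c * e / (c * e + (n - c)) = tilt e (c / n)"
    using \<open>n > 0\<close> by (simp add: tilt_frac)
  finally show ?thesis
    unfolding D_def .
qed

lemma b_ss_m_ss_eq:
  assumes "1 \<le> s" "s < d" "\<epsilon> > 0"
  defines "p \<equiv> tilt (exp \<epsilon>) (real s / real d)"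
  shows "b_ss d s \<epsilon> = (real s - p) / (real d - 1)" "m_ss d s \<epsilon> = p - b_ss d s \<epsilon>"
proof -
  define e T where "e = exp \<epsilon>" and "T = real s * e + (real d - real s)"
  have pos: "T > 0" "real d - 1 > 0"
    unfolding T_def e_def using assms by (simp_all add: add_pos_pos)
  have p: "p = real s * e / T"
    unfolding p_def e_def[symmetric] T_def using assms by (simp add: tilt_frac)
  have den: "real s * (e - 1) + real d = T"
    unfolding T_def by (simp add: algebra_simps)
  show b: "b_ss d s \<epsilon> = (real s - p) / (real d - 1)"
    unfolding b_ss_def e_def[symmetric] den p using pos unfolding T_def by (simp add: field_simps)
  have "p - (real s - p) / (real d - 1) = (real s * e * real d - real s * T) / ((real d - 1) * T)"
    unfolding p using pos by (simp add: field_simps)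
  also have "real s * e * real d - real s * T = real s * (real d - real s) * (e - 1)"
    unfolding T_def by (simp add: algebra_simps)
  finally show "m_ss d s \<epsilon> = p - b_ss d s \<epsilon>"
    unfolding m_ss_def e_def[symmetric] den b by simp
qed

lemma E_ss_eq_risk:
  assumes "j < d" "1 \<le> s" "s < d" "\<epsilon> > 0"
  shows "E_ss d s \<epsilon> j = risk (real d) (real s) (tilt (exp \<epsilon>) (real s / real d))"
proof -
  let ?p = "tilt (exp \<epsilon>) (real s / real d)" and ?Z = "ss_Z d s"
  let ?m = "m_ss d s \<epsilon>" and ?b = "b_ss d s \<epsilon>"
  let ?c = "real (card {S \<in> ?Z. j \<in> S})" and ?n = "real (card ?Z)"
  have Q: "real ((d - 1) choose (s - 1)) * exp \<epsilon> + real ((d - 1) choose s) = ?c * exp \<epsilon> + (?n - ?c)"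
  proof -
    have "?c + real (card {S \<in> ?Z. j \<notin> S}) = ?n"
      using card_filter_add_filter_not[OF finite_ss_Z] by (metis of_nat_add)
    then show ?thesis
      by (simp add: card_ss_Z_mem[OF assms(1,2)] card_ss_Z_not_mem[OF assms(1)])
  qed
  have "?Z \<noteq> {}"
    using card_ss_Z[of d s] assms(3) by (metis card.empty binomial_eq_0_iff not_le le_less)
  have "E_ss d s \<epsilon> j = (\<Sum>S\<in>?Z. (if j \<in> S then exp \<epsilon> else 1) / (?c * exp \<epsilon> + (?n - ?c))
      * (sq_err_base d s ?m ?b - 2 / ?m * of_bool (j \<in> S)))"
    unfolding E_ss_def q_ss_def Q by (intro sum.cong refl) (simp add: sq_err_subset[OF _ assms(1)])
  also have "\<dots> = sq_err_base d s ?m ?b - 2 / ?m * tilt (exp \<epsilon>) (?c / ?n)"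
    by (rule sum_tilted_weights[OF finite_ss_Z \<open>?Z \<noteq> {}\<close>]) simp
  also have "?c / ?n = real s / real d"
    using card_ss_Z_mem_fraction assms by simp
  also have "sq_err_base d s ?m ?b - 2 / ?m * ?p = risk (real d) (real s) ?p"
    using tilt_inclusion_bounds(1)[of "exp \<epsilon>" "real s" "real d"] assms
    by (intro sq_err_base_debiased b_ss_m_ss_eq) simp_all
  finally show ?thesis .
qed

lemma b_mrc_m_mrc_eq:
  fixes d s N :: nat and \<epsilon> :: real
  defines "P \<equiv> binom_exp N (real s / real d) (tilt (exp \<epsilon>))"
  shows "b_mrc d s \<epsilon> N = (real s - P) / (real d - 1)" "m_mrc d s \<epsilon> N = P - b_mrc d s \<epsilon> N"
proof -
  have "binom_exp N (real s / real d) (\<lambda>\<theta>. real s - exp \<epsilon> * \<theta> / (exp \<epsilon> * \<theta> + (1 - \<theta>)))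
      = binom_exp N (real s / real d) (\<lambda>\<theta>. real s + (- 1) * tilt (exp \<epsilon>) \<theta>)"
    unfolding tilt_def by (simp add: mult.commute)
  also have "\<dots> = real s - P"
    unfolding P_def binom_exp_affine by simp
  finally show "b_mrc d s \<epsilon> N = (real s - P) / (real d - 1)" "m_mrc d s \<epsilon> N = P - b_mrc d s \<epsilon> N"
    unfolding b_mrc_def m_mrc_def P_def tilt_def by simp_all
qed

lemma sum_mrc_selection:
  assumes "j < d" "s \<le> d" "N > 0" "zs \<in> PiE {..<N} (\<lambda>_. ss_Z d s)"
  shows "(\<Sum>k<N. q_ss d s \<epsilon> j (zs k) / (\<Sum>k'<N. q_ss d s \<epsilon> j (zs k')) * sq_err d j m b (zs k))
       = sq_err_base d s m b - 2 / m * tilt (exp \<epsilon>) (real (card {k. k < N \<and> j \<in> zs k}) / real N)"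
proof -
  let ?Q = "real ((d - 1) choose (s - 1)) * exp \<epsilon> + real ((d - 1) choose s)"
  let ?c = "real (card {k \<in> {..<N}. j \<in> zs k})"
  let ?n = "real (card {..<N})"
  let ?D = "?c * exp \<epsilon> + (?n - ?c)"
  have "?Q > 0"
    using assms(2) by (simp add: add_pos_nonneg)
  have "(\<Sum>k'<N. q_ss d s \<epsilon> j (zs k')) = (\<Sum>k'<N. if j \<in> zs k' then exp \<epsilon> else 1) / ?Q"
    unfolding q_ss_def sum_divide_distrib ..
  also have "(\<Sum>k'<N. if j \<in> zs k' then exp \<epsilon> else 1) = ?D"
    using card_filter_add_filter_not[of "{..<N}" "\<lambda>k. j \<in> zs k"]
    by (simp add: sum_if_card algebra_simps flip: of_nat_add)
  finally have W: "(\<Sum>k'<N. q_ss d s \<epsilon> j (zs k')) = ?D / ?Q" .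
  have "(\<Sum>k<N. q_ss d s \<epsilon> j (zs k) / (\<Sum>k'<N. q_ss d s \<epsilon> j (zs k')) * sq_err d j m b (zs k))
      = (\<Sum>k\<in>{..<N}. (if j \<in> zs k then exp \<epsilon> else 1) / ?D * (sq_err_base d s m b - 2 / m * of_bool (j \<in> zs k)))"
  proof (intro sum.cong refl)
    fix k assume "k \<in> {..<N}"
    then have "zs k \<in> ss_Z d s"
      using assms(4) by auto
    then show "q_ss d s \<epsilon> j (zs k) / (\<Sum>k'<N. q_ss d s \<epsilon> j (zs k')) * sq_err d j m b (zs k)
        = (if j \<in> zs k then exp \<epsilon> else 1) / ?D * (sq_err_base d s m b - 2 / m * of_bool (j \<in> zs k))"
      unfolding W unfolding q_ss_def sq_err_subset[OF \<open>zs k \<in> ss_Z d s\<close> assms(1)]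
      using \<open>?Q > 0\<close> by simp
  qed
  also have "\<dots> = sq_err_base d s m b - 2 / m * tilt (exp \<epsilon>) (?c / ?n)"
    by (rule sum_tilted_weights) (use assms(3) in auto)
  finally show ?thesis
    by simp
qed

lemma E_mrc_eq_risk:
  assumes "j < d" "1 \<le> s" "s < d" "N > 0"
    and "real d * binom_exp N (real s / real d) (tilt (exp \<epsilon>)) \<noteq> real s"
  shows "E_mrc d s \<epsilon> N j = risk (real d) (real s) (binom_exp N (real s / real d) (tilt (exp \<epsilon>)))"
proof -
  let ?P = "binom_exp N (real s / real d) (tilt (exp \<epsilon>))"
  let ?m = "m_mrc d s \<epsilon> N" and ?b = "b_mrc d s \<epsilon> N" and ?Z = "ss_Z d s"
  let ?M = "real (card ?Z)"
  let ?c = "real (card {S \<in> ?Z. j \<in> S})" and ?c' = "real (card {S \<in> ?Z. j \<notin> S})"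
  let ?H = "\<lambda>c. sq_err_base d s ?m ?b + (- 2 / ?m) * tilt (exp \<epsilon>) (real c / real N)"
  have "?M > 0"
    using assms(3) by (simp add: card_ss_Z)
  have c_frac: "?c / ?M = real s / real d"
    using card_ss_Z_mem_fraction[OF assms(1,2)] assms(3) by simp
  have "?c + ?c' = ?M"
    using card_filter_add_filter_not[OF finite_ss_Z] by (metis of_nat_add)
  then have fractions: "?c / ?M = real s / real d" "?c' / ?M = 1 - real s / real d"
    using \<open>?M > 0\<close> c_frac by (simp_all add: field_simps)
  have "E_mrc d s \<epsilon> N j = (\<Sum>zs\<in>PiE {..<N} (\<lambda>_. ?Z). ?H (card {k. k < N \<and> j \<in> zs k})) / ?M ^ N"
    unfolding E_mrc_def
  proof (intro arg_cong2[where f = "(/)"] sum.cong refl)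
    fix zs assume "zs \<in> PiE {..<N} (\<lambda>_. ?Z)"
    from sum_mrc_selection[OF assms(1) less_imp_le[OF assms(3)] assms(4) this]
    show "(\<Sum>k<N. q_ss d s \<epsilon> j (zs k) / (\<Sum>k'<N. q_ss d s \<epsilon> j (zs k')) * sq_err d j ?m ?b (zs k))
        = ?H (card {k. k < N \<and> j \<in> zs k})"
      by simp
  qed
  also have "\<dots> = binom_sum N ?c ?c' ?H / ?M ^ N"
    by (subst sum_PiE_count_eq_binom_sum[OF finite_ss_Z]) (rule refl)
  also have "\<dots> = binom_sum N (?c / ?M) (?c' / ?M) ?H"
    using \<open>?M > 0\<close> by (intro binom_sum_scale) simp
  also have "\<dots> = binom_exp N (real s / real d) (\<lambda>\<theta>. sq_err_base d s ?m ?b + (- 2 / ?m) * tilt (exp \<epsilon>) \<theta>)"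
    unfolding fractions binom_exp_eq_binom_sum ..
  also have "\<dots> = sq_err_base d s ?m ?b - 2 / ?m * ?P"
    unfolding binom_exp_affine by simp
  also have "\<dots> = risk (real d) (real s) ?P"
    using assms by (intro sq_err_base_debiased b_mrc_m_mrc_eq) simp_all
  finally show ?thesis .
qed

lemma E_mrc_le_E_ss:
  assumes "j < d" "1 \<le> s" "s < d" "\<epsilon> > 0" "lam > 0" "real N \<ge> exp \<epsilon> * (1 + lam) / lam"
  shows "E_mrc d s \<epsilon> N j \<le> (1 + 4 * lam + 5 * lam\<^sup>2 + 2 * lam ^ 3) * E_ss d s \<epsilon> j"
proof -
  have "exp \<epsilon> * (1 + lam) / lam > 0"
    using assms(5) by simp
  then have "N > 0"
    using assms(6) by simp
  have s: "1 \<le> real s" "real s \<le> real d - 1"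
    using assms(2,3) by simp_all
  note bounds = risk_binom_exp_tilt_le[OF _ s assms(5,6)]
  show ?thesis
    unfolding E_ss_eq_risk[OF assms(1-4)]
    using E_mrc_eq_risk[OF assms(1-3) \<open>N > 0\<close>] bounds assms(4) by simp
qed

lemma ss_size_bounds:
  assumes "d \<ge> 2" "\<epsilon> \<ge> 0"
  shows "1 \<le> ss_size d \<epsilon>" "ss_size d \<epsilon> < d"
proof -
  define x where "x = real d / (1 + exp \<epsilon>)"
  have "0 < 1 + exp \<epsilon>"
    by (simp add: add_pos_pos)
  then have "0 < \<lceil>x\<rceil>"
    unfolding x_def using assms(1) by simp
  have "x \<le> real d / 2"
    unfolding x_def using assms \<open>0 < 1 + exp \<epsilon>\<close> by (intro divide_left_mono) simp_all
  then have "x \<le> real (d - 1)"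
    using assms(1) by (simp add: of_nat_diff)
  then have "\<lceil>x\<rceil> \<le> int d - 1"
    using assms(1) by (intro ceiling_le) (simp add: of_nat_diff)
  with \<open>0 < \<lceil>x\<rceil>\<close> show "1 \<le> ss_size d \<epsilon>" "ss_size d \<epsilon> < d"
    unfolding ss_size_def x_def[symmetric] using assms(1) by (simp_all add: Suc_le_eq)
qed

lemma sample_size_suffices:
  fixes e lam N :: real
  assumes "e > 0" "lam > 0"
    and "N \<ge> 2 * (e + 3)\<^sup>2 * (1 + lam)\<^sup>2 / (0.24\<^sup>2 * lam\<^sup>2) * ln (8 * (1 + lam) / (0.24 * lam))"
  shows "N \<ge> e * (1 + lam) / lam"
proof -
  define Y L where "Y = (e + 3) * (1 + lam) / lam" and "L = ln (8 * (1 + lam) / (0.24 * lam))"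
  have "lam \<le> (e + 3) * (1 + lam)"
    using mult_pos_pos[OF assms(1,2)] assms(1,2) by (simp add: algebra_simps)
  then have "1 \<le> Y"
    unfolding Y_def using assms(2) by (simp add: le_divide_eq)
  have "3 \<le> 8 * (1 + lam) / (0.24 * lam)"
    using assms(2) by (simp add: le_divide_eq)
  then have "1 \<le> L"
    unfolding L_def using exp_le by (subst ln_ge_iff) simp_all
  then have "Y\<^sup>2 * 1 \<le> Y\<^sup>2 * ((2 / 0.24\<^sup>2) * L)"
    by (intro mult_left_mono) (simp_all add: power2_eq_square)
  moreover have "2 * (e + 3)\<^sup>2 * (1 + lam)\<^sup>2 / (0.24\<^sup>2 * lam\<^sup>2) = (2 / 0.24\<^sup>2) * Y\<^sup>2"
    unfolding Y_def by (simp add: power_divide power_mult_distrib)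
  moreover have "Y \<le> Y\<^sup>2"
    using \<open>1 \<le> Y\<close> by (simp add: power2_eq_square)
  moreover have "e * (1 + lam) / lam \<le> Y"
    unfolding Y_def using assms(2) by (simp add: divide_right_mono)
  ultimately show ?thesis
    using assms(3) unfolding L_def by (simp add: ac_simps)
qed

theorem theorem11:
  fixes d N j :: nat and \<epsilon> lam :: real
  assumes "d \<ge> 2" and "\<epsilon> \<ge> 1" and "lam > 0"
    and "real N \<ge> 2 * (exp \<epsilon> + 3)\<^sup>2 * (1 + lam)\<^sup>2 / (0.24\<^sup>2 * lam\<^sup>2)
                   * ln (8 * (1 + lam) / (0.24 * lam))"
    and "j < d"
  shows "E_mrc d (ss_size d \<epsilon>) \<epsilon> N j
           \<le> (1 + 4 * lam + 5 * lam\<^sup>2 + 2 * lam ^ 3) * E_ss d (ss_size d \<epsilon>) \<epsilon> j"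
proof (rule E_mrc_le_E_ss)
  show "1 \<le> ss_size d \<epsilon>" "ss_size d \<epsilon> < d"
    using ss_size_bounds assms(1,2) by simp_all
  show "exp \<epsilon> * (1 + lam) / lam \<le> real N"
    using sample_size_suffices[OF exp_gt_zero assms(3,4)] .
qed (use assms in simp_all)

end
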